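(* Let $\{x_k\}$ be generated by the Subgradient-InexP method with the exogenous stepsize rule, under the standing assumptions, and let $\Omega:=\{x\in C: f(x)\le\inf_k f(x_k)\}$. If $\Omega\neq\varnothing$, then $\{x_k\}$ is quasi-Fejér convergent to $\Omega$; consequently $\{x_k\}$ is bounded.
   Context: A sequence $\{y_k\}\subset\mathbb{R}^n$ is quasi-Fejér convergent to a nonempty set $W$ if for every $w\in W$ there is $\{\delta_k\}$ with $\delta_k\ge0$, $\sum_k\delta_k<\infty$, and $\|y_{k+1}-w\|^2\le\|y_k-w\|^2+\delta_k$ for all $k$. Problem: minimize a convex $f:\mathbb{R}^n\to\mathbb{R}$ over a nonempty closed convex $C\subset\mathbb{R}^n$. For $\epsilon\ge0$, $\partial_\epsilon f(x):=\{s: f(y)\ge f(x)+\langle s,y-x\rangle-\epsilon\ \forall y\}$. Relative error tolerance function: any $\varphi_{\gamma,\theta,\lambda}:(\mathbb{R}^n)^3\to[0,\infty)$ with $\varphi_{\gamma,\theta,\lambda}(u,v,w)\le\gamma\|v-u\|^2+\theta\|w-v\|^2+\lambda\|w-u\|^2$; for $u\in C$, $\mathcal{P}_C(\varphi_{\gamma,\theta,\lambda},u,v):=\{w\in C:\langle v-w,z-w\rangle\le\varphi_{\gamma,\theta,\lambda}(u,v,w)\ \forall z\in C\}$. Subgradient-InexP method: $x_0\in C$; at iteration $k$, if $0\in\partial f(x_k)$ stop; otherwise choose nonzero $s_k\in\partial_{\epsilon_k}f(x_k)$, stepsize $t_k>0$, and $x_{k+1}\in\mathcal{P}_C(\varphi_{\gamma_k,\theta_k,\lambda_k},x_k,x_k-t_ks_k)$.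 Standing assumptions: $\gamma_k\in[0,\bar\gamma)$, $\theta_k\in[0,\bar\theta)$, $\lambda_k\in[0,\bar\lambda)$ with $\bar\gamma\ge0$, $\bar\theta,\bar\lambda\in[0,1/2)$; the sequence is infinite. Exogenous stepsize rule: $\mu\ge0$; $\{\alpha_k\}$, $\{\epsilon_k\}$ nonnegative, $\{\epsilon_k\}$ nonincreasing, $\sum_k\alpha_k=+\infty$, $\sum_k\alpha_k^2<+\infty$, $\epsilon_k\le\mu\alpha_k$; $t_k:=\alpha_k/\eta_k$, $\eta_k:=\max\{1,\|s_k\|\}$. *)

theory Defs
  imports "HOL-Analysis.Analysis"
begin

definition eps_subdiff :: "('a::real_inner \<Rightarrow> real) \<Rightarrow> real \<Rightarrow> 'a \<Rightarrow> 'a set" where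
  "eps_subdiff f eps x = {s. \<forall>y. f y \<ge> f x + inner s (y - x) - eps}"

definition quasi_fejer :: "(nat \<Rightarrow> 'a::real_normed_vector) \<Rightarrow> 'a set \<Rightarrow> bool" where
  "quasi_fejer y W \<longleftrightarrow> W \<noteq> {} \<and>
     (\<forall>w\<in>W. \<exists>\<delta>::nat \<Rightarrow> real. (\<forall>k. \<delta> k \<ge> 0) \<and> summable \<delta> \<and>
        (\<forall>k. (norm (y (Suc k) - w))\<^sup>2 \<le> (norm (y k - w))\<^sup>2 + \<delta> k))"

definition rel_err_tol :: "real \<Rightarrow> real \<Rightarrow> real \<Rightarrow> ('a::real_normed_vector \<Rightarrow> 'a \<Rightarrow> 'a \<Rightarrow> real) \<Rightarrow> bool" where
  "rel_err_tol \<gamma> \<theta> lam \<phi> \<longleftrightarrow> (\<forall>u v w. 0 \<le> \<phi> u v w \<and>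
     \<phi> u v w \<le> \<gamma> * (norm (v - u))\<^sup>2 + \<theta> * (norm (w - v))\<^sup>2 + lam * (norm (w - u))\<^sup>2)"

definition inexP :: "'a::real_inner set \<Rightarrow> ('a \<Rightarrow> 'a \<Rightarrow> 'a \<Rightarrow> real) \<Rightarrow> 'a \<Rightarrow> 'a \<Rightarrow> 'a set" where
  "inexP C \<phi> u v = {w\<in>C. \<forall>z\<in>C. inner (v - w) (z - w) \<le> \<phi> u v w}"

end

theory Submission imports Defs begin

text \<open>
  Testing the inexact projection condition at \<open>z = u\<close> shows that the new point moves at most
  a fixed multiple of the step \<open>\<parallel>v - u\<parallel>\<close>; testing it at a point \<open>z\<close> of \<open>\<Omega>\<close> then gives, as
  for exact projections, \<open>\<parallel>x\<^sub>k\<^sub>+\<^sub>1 - z\<parallel>\<^sup>2 \<le> \<parallel>x\<^sub>k - z\<parallel>\<^sup>2 + 2 t\<^sub>k \<langle>s\<^sub>k, z - x\<^sub>k\<rangle> + O(\<alpha>\<^sub>k\<^sup>2)\<close>.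
  Since \<open>f z \<le> f x\<^sub>k\<close>, the \<open>\<epsilon>\<^sub>k\<close>-subgradient inequality bounds the middle term by
  \<open>2 t\<^sub>k \<epsilon>\<^sub>k \<le> 2 \<mu> \<alpha>\<^sub>k\<^sup>2\<close>, and the normalisation \<open>t\<^sub>k = \<alpha>\<^sub>k / max 1 \<parallel>s\<^sub>k\<parallel>\<close> makes every error term
  \<open>O(\<alpha>\<^sub>k\<^sup>2)\<close>, which is summable. A quasi-Fejer sequence is bounded by telescoping.
\<close>

lemma le_of_sq_le_quadratic:
  fixes a d c G :: real
  assumes "c > 0" "a \<ge> 0" "d \<ge> 0" "G \<ge> 0" "c * d\<^sup>2 \<le> G * a\<^sup>2 + a * d"
  shows "d \<le> ((G + 1) / c + 1) * a"
proof (cases "d \<le> a")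
  case True
  have "1 * a \<le> ((G + 1) / c + 1) * a"
    using assms by (intro mult_right_mono) auto
  then show ?thesis using True by linarith
next
  case False
  then have "d > 0" "a < d" using assms by auto
  then have "G * a\<^sup>2 \<le> G * (a * d)"
    using assms by (intro mult_left_mono) (auto simp: power2_eq_square intro: mult_left_mono)
  then have "(c * d) * d \<le> ((G + 1) * a) * d"
    using assms(5) by (simp add: power2_eq_square algebra_simps)
  then have "c * d \<le> (G + 1) * a" using \<open>d > 0\<close> by (rule mult_right_le_imp_le)
  then have "d \<le> (G + 1) * a / c" using \<open>c > 0\<close> by (simp add: pos_le_divide_eq mult.commute)
  also have "\<dots> \<le> ((G + 1) / c + 1) * a" using assms(2) by (simp add: algebra_simps)
  finally show ?thesis .
qed

lemma inexP_in: "w \<in> inexP C \<phi> u v \<Longrightarrow> w \<in> C"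
  by (simp add: inexP_def)

lemma inexP_inner_le:
  assumes "w \<in> inexP C \<phi> u v" "z \<in> C" "rel_err_tol \<gamma> \<theta> lam \<phi>"
  shows "inner (v - w) (z - w)
    \<le> \<gamma> * (norm (v - u))\<^sup>2 + \<theta> * (norm (w - v))\<^sup>2 + lam * (norm (w - u))\<^sup>2"
  using assms unfolding inexP_def rel_err_tol_def by (blast intro: order_trans)

lemma inexP_displacement_le:
  fixes u v w :: "'a::real_inner"
  assumes w: "w \<in> inexP C \<phi> u v" and u: "u \<in> C" and tol: "rel_err_tol \<gamma> \<theta> lam \<phi>"
    and "0 \<le> \<gamma>" "\<gamma> \<le> \<gamma>b" "0 \<le> \<theta>" "\<theta> \<le> \<theta>b" "0 \<le> lam" "lam \<le> lamb" "\<theta>b + lamb < 1"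
  shows "norm (w - u) \<le> ((\<gamma>b + 2) / (1 - \<theta>b - lamb) + 1) * norm (v - u)"
proof -
  define a d p where "a = norm (v - u)" and "d = norm (w - u)" and "p = inner (w - u) (u - v)"
  have lhs: "inner (v - w) (u - w) = d\<^sup>2 + p"
    unfolding d_def p_def by (simp add: power2_norm_eq_inner inner_diff_left inner_diff_right inner_commute)
  have wv: "(norm (w - v))\<^sup>2 = d\<^sup>2 + 2 * p + a\<^sup>2"
    unfolding a_def d_def p_def by (simp add: power2_norm_eq_inner inner_diff_left inner_diff_right inner_commute)
  have p: "\<bar>p\<bar> \<le> a * d"
    unfolding a_def d_def p_def using Cauchy_Schwarz_ineq2[of "w - u" "u - v"]
    by (simp add: norm_minus_commute mult.commute)
  have "d\<^sup>2 + p \<le> \<gamma> * a\<^sup>2 + \<theta> * (d\<^sup>2 + 2 * p + a\<^sup>2) + lam * d\<^sup>2"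
    using inexP_inner_le[OF w u tol] lhs wv unfolding a_def d_def by simp
  then have "(1 - \<theta> - lam) * d\<^sup>2 \<le> (\<gamma> + \<theta>) * a\<^sup>2 + (2 * \<theta> - 1) * p"
    by (simp add: algebra_simps)
  also have "\<dots> \<le> (\<gamma>b + 1) * a\<^sup>2 + a * d"
  proof -
    have "(\<gamma> + \<theta>) * a\<^sup>2 \<le> (\<gamma>b + 1) * a\<^sup>2" using assms by (intro mult_right_mono) auto
    moreover have "(2 * \<theta> - 1) * p \<le> \<bar>2 * \<theta> - 1\<bar> * \<bar>p\<bar>" by (metis abs_ge_self abs_mult)
    moreover have "\<bar>2 * \<theta> - 1\<bar> * \<bar>p\<bar> \<le> 1 * (a * d)" using p assms by (intro mult_mono) auto
    ultimately show ?thesis by linarith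
  qed
  finally have "(1 - \<theta> - lam) * d\<^sup>2 \<le> (\<gamma>b + 1) * a\<^sup>2 + a * d" .
  moreover have "(1 - \<theta>b - lamb) * d\<^sup>2 \<le> (1 - \<theta> - lam) * d\<^sup>2"
    using assms by (intro mult_right_mono) auto
  ultimately have "(1 - \<theta>b - lamb) * d\<^sup>2 \<le> (\<gamma>b + 1) * a\<^sup>2 + a * d" by linarith
  moreover have "1 - \<theta>b - lamb > 0" "\<gamma>b + 1 \<ge> 0" "a \<ge> 0" "d \<ge> 0"
    using assms by (auto simp: a_def d_def)
  ultimately have "d \<le> ((\<gamma>b + 1 + 1) / (1 - \<theta>b - lamb) + 1) * a"
    using le_of_sq_le_quadratic by blast
  then show ?thesis unfolding a_def d_def by (simp add: add.commute)
qed

lemma inexP_sq_dist_le: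
  fixes u v w z :: "'a::real_inner"
  assumes w: "w \<in> inexP C \<phi> u v" and z: "z \<in> C" and tol: "rel_err_tol \<gamma> \<theta> lam \<phi>"
    and "0 \<le> \<gamma>" "0 \<le> \<theta>" "\<theta> \<le> 1/2" "0 \<le> lam" "lam \<le> 1/2"
    and disp: "norm (w - u) \<le> D * norm (v - u)"
  shows "(norm (w - z))\<^sup>2 \<le> (norm (u - z))\<^sup>2 + 2 * inner (u - v) (z - u)
    + (2 * \<gamma> + (D + 1)\<^sup>2 + 2 * D) * (norm (v - u))\<^sup>2"
proof -
  define a d N where "a = norm (v - u)" and "d = norm (w - u)" and "N = (norm (w - v))\<^sup>2"
  \<comment> \<open>The term \<open>-d\<^sup>2\<close> absorbs the error \<open>2 lam d\<^sup>2\<close> because \<open>lam \<le> 1/2\<close>.\<close>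
  have ident: "(norm (w - z))\<^sup>2 = (norm (u - z))\<^sup>2 - d\<^sup>2 + 2 * inner (v - w) (z - w)
      + 2 * inner (v - u) (w - u) + 2 * inner (u - v) (z - u)"
    unfolding d_def by (simp add: power2_norm_eq_inner inner_diff_left inner_diff_right inner_commute)
  have proj: "inner (v - w) (z - w) \<le> \<gamma> * a\<^sup>2 + \<theta> * N + lam * d\<^sup>2"
    using inexP_inner_le[OF w z tol] unfolding a_def d_def N_def .
  have "norm (w - v) \<le> d + a"
    using norm_triangle_ineq[of "w - u" "u - v"] unfolding a_def d_def
    by (simp add: norm_minus_commute)
  then have "norm (w - v) \<le> (D + 1) * a"
    using disp unfolding a_def d_def by (simp add: algebra_simps)
  then have "N \<le> (D + 1)\<^sup>2 * a\<^sup>2"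
    unfolding N_def power_mult_distrib[symmetric] by (intro power_mono) simp_all
  moreover have "2 * \<theta> * N \<le> 1 * N" using assms by (intro mult_right_mono) (simp_all add: N_def)
  ultimately have wv: "2 * \<theta> * N \<le> (D + 1)\<^sup>2 * a\<^sup>2" by linarith
  have "2 * lam * d\<^sup>2 \<le> 1 * d\<^sup>2" using assms by (intro mult_right_mono) simp_all
  moreover have "inner (v - u) (w - u) \<le> D * a\<^sup>2"
  proof -
    have "inner (v - u) (w - u) \<le> a * d"
      unfolding a_def d_def by (rule norm_cauchy_schwarz)
    also have "\<dots> \<le> a * (D * a)" using disp unfolding a_def d_def by (simp add: mult_left_mono)
    finally show ?thesis by (simp add: power2_eq_square algebra_simps)
  qed
  moreover have "(2 * \<gamma> + (D + 1)\<^sup>2 + 2 * D) * a\<^sup>2 = 2 * (\<gamma> * a\<^sup>2) + (D + 1)\<^sup>2 * a\<^sup>2 + 2 * (D * a\<^sup>2)"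
    by (simp add: algebra_simps)
  ultimately have "(norm (w - z))\<^sup>2 \<le> (norm (u - z))\<^sup>2 + 2 * inner (u - v) (z - u)
      + (2 * \<gamma> + (D + 1)\<^sup>2 + 2 * D) * a\<^sup>2"
    using ident proj wv by linarith
  then show ?thesis by (simp only: a_def)
qed

lemma eps_subdiff_inner_le:
  assumes "s \<in> eps_subdiff f \<epsilon> x" "f z \<le> f x"
  shows "inner s (z - x) \<le> \<epsilon>"
proof -
  have "f z \<ge> f x + inner s (z - x) - \<epsilon>" using assms(1) by (simp add: eps_subdiff_def)
  with assms(2) show ?thesis by linarith
qed

lemma normalized_step_le:
  fixes \<alpha> :: real and s :: "'a::real_normed_vector"
  assumes "\<alpha> \<ge> 0"
  shows "\<alpha> / max 1 (norm s) \<le> \<alpha>" "\<alpha> / max 1 (norm s) * norm s \<le> \<alpha>"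
proof -
  have "\<alpha> / max 1 (norm s) * norm s = \<alpha> * (norm s / max 1 (norm s))" by simp
  also have "\<dots> \<le> \<alpha> * 1" using assms by (intro mult_left_mono) (auto simp: divide_le_eq_1)
  finally show "\<alpha> / max 1 (norm s) * norm s \<le> \<alpha>" by simp
  have "\<alpha> * 1 \<le> \<alpha> * max 1 (norm s)" using assms by (intro mult_left_mono) auto
  then show "\<alpha> / max 1 (norm s) \<le> \<alpha>" by (simp add: divide_le_eq)
qed

lemma subgradient_inexP_step:
  fixes u s w z :: "'a::real_inner"
  assumes u: "u \<in> C" and z: "z \<in> C" and fz: "f z \<le> f u"
    and w: "w \<in> inexP C \<phi> u (u - t *\<^sub>R s)" and tol: "rel_err_tol \<gamma> \<theta> lam \<phi>"
    and "0 \<le> \<gamma>" "\<gamma> \<le> \<gamma>b" "0 \<le> \<theta>" "\<theta> \<le> \<theta>b" "\<theta>b < 1/2" "0 \<le> lam" "lam \<le> lamb" "lamb < 1/2"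
    and s: "s \<in> eps_subdiff f \<epsilon> u" and "\<epsilon> \<le> \<mu> * \<alpha>" "0 \<le> \<mu>"
    and "0 < t" "t \<le> \<alpha>" "t * norm s \<le> \<alpha>"
  defines "D \<equiv> (\<gamma>b + 2) / (1 - \<theta>b - lamb) + 1"
  shows "(norm (w - z))\<^sup>2 \<le> (norm (u - z))\<^sup>2 + (2 * \<gamma>b + (D + 1)\<^sup>2 + 2 * D + 2 * \<mu>) * \<alpha>\<^sup>2"
proof -
  have step_norm: "norm (u - t *\<^sub>R s - u) = t * norm s" using \<open>0 < t\<close> by simp
  have "norm (w - u) \<le> D * norm (u - t *\<^sub>R s - u)"
    unfolding D_def using inexP_displacement_le[OF w u tol] assms by simp
  from inexP_sq_dist_le[OF w z tol _ _ _ _ _ this] assms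
  have "(norm (w - z))\<^sup>2 \<le> (norm (u - z))\<^sup>2 + 2 * (t * inner s (z - u))
      + (2 * \<gamma> + (D + 1)\<^sup>2 + 2 * D) * (t * norm s)\<^sup>2"
    unfolding step_norm by simp
  moreover have "t * inner s (z - u) \<le> \<mu> * \<alpha>\<^sup>2"
  proof -
    have "t * inner s (z - u) \<le> t * \<epsilon>"
      using eps_subdiff_inner_le[OF s fz] \<open>0 < t\<close> by simp
    also have "\<dots> \<le> t * (\<mu> * \<alpha>)" using assms by simp
    also have "\<dots> \<le> \<alpha> * (\<mu> * \<alpha>)"
      using assms by (intro mult_right_mono) (auto intro: order_trans[of 0 t])
    finally show ?thesis by (simp add: power2_eq_square algebra_simps)
  qed
  moreover have "(2 * \<gamma> + (D + 1)\<^sup>2 + 2 * D) * (t * norm s)\<^sup>2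
      \<le> (2 * \<gamma>b + (D + 1)\<^sup>2 + 2 * D) * \<alpha>\<^sup>2"
  proof (intro mult_mono power_mono)
    have "D \<ge> 0" unfolding D_def using assms by simp
    then show "0 \<le> 2 * \<gamma>b + (D + 1)\<^sup>2 + 2 * D" using assms by simp
  qed (use assms in auto)
  ultimately show ?thesis by (simp add: algebra_simps)
qed

lemma quasi_fejer_bounded:
  assumes "quasi_fejer y W"
  shows "bounded (range y)"
proof -
  obtain w \<delta> where nonneg: "\<And>k. \<delta> k \<ge> 0" and "summable \<delta>"
    and step: "\<And>k. (norm (y (Suc k) - w))\<^sup>2 \<le> (norm (y k - w))\<^sup>2 + \<delta> k"
    using assms unfolding quasi_fejer_def by blast
  define R where "R = (norm (y 0 - w))\<^sup>2 + (\<Sum>k. \<delta> k)"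
  have partial: "(norm (y n - w))\<^sup>2 \<le> (norm (y 0 - w))\<^sup>2 + (\<Sum>k<n. \<delta> k)" for n
  proof (induction n)
    case (Suc n)
    then show ?case using step[of n] by simp
  qed simp
  have partial_le: "(\<Sum>k<n. \<delta> k) \<le> (\<Sum>k. \<delta> k)" for n
    using nonneg \<open>summable \<delta>\<close> by (intro sum_le_suminf) auto
  have "(norm (y n - w))\<^sup>2 \<le> R" for n
    using partial[of n] partial_le[of n] unfolding R_def by linarith
  then have "dist w (y n) \<le> sqrt R" for n
    by (simp add: dist_norm norm_minus_commute real_le_rsqrt)
  then show ?thesis unfolding bounded_def by blast
qed

theorem mainTheorem4:
  fixes f :: "'a::euclidean_space \<Rightarrow> real" and C :: "'a set"
    and x s :: "nat \<Rightarrow> 'a"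
    and t \<alpha> \<epsilon> \<gamma> \<theta> lam :: "nat \<Rightarrow> real"
    and \<phi> :: "nat \<Rightarrow> 'a \<Rightarrow> 'a \<Rightarrow> 'a \<Rightarrow> real"
    and \<gamma>bar \<theta>bar lambar \<mu> :: real
  assumes f_convex: "convex_on UNIV f"
    and C_closed: "closed C" and C_convex: "convex C" and C_ne: "C \<noteq> {}"
    and x0: "x 0 \<in> C"
    and no_stop: "\<And>k. 0 \<notin> eps_subdiff f 0 (x k)"
    and s_nz: "\<And>k. s k \<noteq> 0"
    and s_sub: "\<And>k. s k \<in> eps_subdiff f (\<epsilon> k) (x k)"
    and t_pos: "\<And>k. t k > 0"
    and t_def: "\<And>k. t k = \<alpha> k / max 1 (norm (s k))"
    and x_step: "\<And>k. x (Suc k) \<in> inexP C (\<phi> k) (x k) (x k - t k *\<^sub>R s k)"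
    and \<phi>_tol: "\<And>k. rel_err_tol (\<gamma> k) (\<theta> k) (lam k) (\<phi> k)"
    and \<gamma>_rng: "\<And>k. 0 \<le> \<gamma> k \<and> \<gamma> k < \<gamma>bar"
    and \<theta>_rng: "\<And>k. 0 \<le> \<theta> k \<and> \<theta> k < \<theta>bar"
    and lam_rng: "\<And>k. 0 \<le> lam k \<and> lam k < lambar"
    and \<gamma>bar: "\<gamma>bar \<ge> 0"
    and \<theta>bar: "0 \<le> \<theta>bar \<and> \<theta>bar < 1/2"
    and lambar: "0 \<le> lambar \<and> lambar < 1/2"
    and \<mu>_nn: "\<mu> \<ge> 0"
    and \<alpha>_nn: "\<And>k. \<alpha> k \<ge> 0"
    and \<epsilon>_nn: "\<And>k. \<epsilon> k \<ge> 0"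
    and \<epsilon>_dec: "decseq \<epsilon>"
    and \<alpha>_div: "\<not> summable \<alpha>"
    and \<alpha>_sq: "summable (\<lambda>k. (\<alpha> k)\<^sup>2)"
    and \<epsilon>_le: "\<And>k. \<epsilon> k \<le> \<mu> * \<alpha> k"
    and \<Omega>_ne: "{z\<in>C. \<forall>k. f z \<le> f (x k)} \<noteq> {}"
  shows "quasi_fejer x {z\<in>C. \<forall>k. f z \<le> f (x k)} \<and> bounded (range x)"
proof -
  \<comment> \<open>Convexity of \<open>f\<close>, divergence of \<open>\<Sum> \<alpha>\<^sub>k\<close> and monotonicity of \<open>\<epsilon>\<close> are only needed for convergence, not here.\<close>
  let ?\<Omega> = "{z\<in>C. \<forall>k. f z \<le> f (x k)}"
  define D where "D = (\<gamma>bar + 2) / (1 - \<theta>bar - lambar) + 1"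
  define K where "K = 2 * \<gamma>bar + (D + 1)\<^sup>2 + 2 * D + 2 * \<mu>"
  have xC: "x k \<in> C" for k
    using x0 inexP_in[OF x_step] by (cases k) auto
  have t_le: "t k \<le> \<alpha> k" "t k * norm (s k) \<le> \<alpha> k" for k
    using normalized_step_le[OF \<alpha>_nn, of k "s k"] t_def[of k] by simp_all
  have step: "(norm (x (Suc k) - z))\<^sup>2 \<le> (norm (x k - z))\<^sup>2 + K * (\<alpha> k)\<^sup>2"
    if "z \<in> ?\<Omega>" for z k
  proof -
    from that have z: "z \<in> C" "f z \<le> f (x k)" by auto
    show ?thesis
      unfolding K_def D_def
      by (rule subgradient_inexP_step[OF xC z x_step \<phi>_tol _ _ _ _ _ _ _ _
            s_sub \<epsilon>_le \<mu>_nn t_pos t_le])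
        (use \<gamma>_rng[of k] \<theta>_rng[of k] lam_rng[of k] \<theta>bar lambar in auto)
  qed
  have "K \<ge> 0"
    unfolding K_def D_def using \<gamma>bar \<theta>bar lambar \<mu>_nn by simp
  have "quasi_fejer x ?\<Omega>"
    unfolding quasi_fejer_def
  proof (intro conjI ballI exI[of _ "\<lambda>k. K * (\<alpha> k)\<^sup>2"] allI)
    show "summable (\<lambda>k. K * (\<alpha> k)\<^sup>2)" using \<alpha>_sq by (rule summable_mult)
  qed (use \<Omega>_ne \<open>K \<ge> 0\<close> step in auto)
  then show ?thesis using quasi_fejer_bounded by blast
qed

end
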